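(* Let $S\subseteq\mathbb{R}[\underline x]$. If $\operatorname{QM}(S)$ is archimedean in $\mathbb{R}[\underline x]$, then $\operatorname{qm}(S,\emptyset)$ is archimedean in $\mathscr{M}$ and $\operatorname{QM}(S,\emptyset)$ is archimedean in $\mathscr{M}[\underline x]$.
   Context: Let $\mathbb{R}[\underline x]=\mathbb{R}[x_1,\dots,x_n]$, $\mathscr{M}=\mathbb{R}[\mathtt{m}_{i_1,\dots,i_n}\colon (i_1,\dots,i_n)\in\mathbb{N}_0^n]$ the polynomial ring in countably many indeterminates with $\mathtt{m}_{0,\dots,0}:=1$, $\mathscr{M}[\underline x]=\mathscr{M}\otimes_{\mathbb{R}}\mathbb{R}[\underline x]$, and $\mathtt{m}:\mathscr{M}[\underline x]\to\mathscr{M}$ the unique $\mathscr{M}$-linear map with $\mathtt{m}(x_1^{i_1}\cdots x_n^{i_n})=\mathtt{m}_{i_1,\dots,i_n}$. A quadratic module in a commutative unital ring $A$ is a subset $M$ with $1\in M$, $M+M\subseteq M$, $a^2M\subseteq M$ for $a\in A$; it is archimedean if for every $a\in A$ there is $N\in\mathbb{N}$ with $N\pm a\in M$. $\operatorname{QM}(S)$ is the quadratic module of $\mathbb{R}[\underline x]$ generated by $S$; $\operatorname{qm}(S,\emptyset)$ is the quadratic module of $\mathscr{M}$ generated by $\{\mathtt{m}(f^2s)\colon s\in\{1\}\cup S,\ f\in\mathscr{M}[\underline x]\}$; $\operatorname{QM}(S,\emptyset)$ is the quadratic module of $\mathscr{M}[\underline x]$ generated by $S\cup\{\mathtt{m}(f^2s)\colon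 s\in\{1\}\cup S,\ f\in\mathscr{M}[\underline x]\}$. *)

theory Defs
  imports Complex_Main "HOL-Library.Poly_Mapping"
begin

inductive_set qm_gen :: "'a::comm_ring_1 set \<Rightarrow> 'a set \<Rightarrow> 'a set"
  for A :: "'a set" and G :: "'a set" where
  one: "1 \<in> qm_gen A G"
| gen: "g \<in> G \<Longrightarrow> g \<in> qm_gen A G"
| add: "p \<in> qm_gen A G \<Longrightarrow> q \<in> qm_gen A G \<Longrightarrow> p + q \<in> qm_gen A G"
| sq:  "a \<in> A \<Longrightarrow> p \<in> qm_gen A G \<Longrightarrow> a * a * p \<in> qm_gen A G"

definition archimedean_in :: "'a::comm_ring_1 set \<Rightarrow> 'a set \<Rightarrow> bool" where
  "archimedean_in A M \<longleftrightarrow> (\<forall>a\<in>A. \<exists>N::nat. of_nat N + a \<in> M \<and> of_nat N - a \<in> M)"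

text \<open>Variables x_i are indexed by a finite type 'v (n = CARD('v)); exponent vectors
  (i_1,...,i_n) are elements of 'v =>0 nat.\<close>

type_synonym 'v mon = "'v \<Rightarrow>\<^sub>0 nat"
type_synonym 'v rpoly = "'v mon \<Rightarrow>\<^sub>0 real"
type_synonym 'v mring = "('v mon \<Rightarrow>\<^sub>0 nat) \<Rightarrow>\<^sub>0 real"  \<comment> \<open>ambient ring for M\<close>
type_synonym 'v mxpoly = "'v mon \<Rightarrow>\<^sub>0 'v mring"        \<comment> \<open>ambient ring for M[x]\<close>

text \<open>M = R[m_\<alpha> : \<alpha> \<noteq> 0] (since m_0 := 1): polynomials in indeterminates indexed by
  exponent vectors, in which the indeterminate indexed by 0 does not occur.\<close>
definition Mcar :: "'v mring set" where
  "Mcar = {p. \<forall>\<mu>\<in>Poly_Mapping.keys p. Poly_Mapping.lookup \<mu> 0 = 0}"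

definition mvar :: "'v mon \<Rightarrow> 'v mring" where
  "mvar \<alpha> = (if \<alpha> = 0 then 1 else Poly_Mapping.single (Poly_Mapping.single \<alpha> 1) 1)"

definition MXcar :: "'v mxpoly set" where
  "MXcar = {p. \<forall>\<alpha>. Poly_Mapping.lookup p \<alpha> \<in> Mcar}"

definition mlin :: "'v mxpoly \<Rightarrow> 'v mring" where
  "mlin p = (\<Sum>\<alpha>\<in>Poly_Mapping.keys p. Poly_Mapping.lookup p \<alpha> * mvar \<alpha>)"

definition emb_R :: "'v rpoly \<Rightarrow> 'v mxpoly" where
  "emb_R p = Poly_Mapping.map (\<lambda>c. Poly_Mapping.single 0 c) p"

definition emb_M :: "'v mring \<Rightarrow> 'v mxpoly" where
  "emb_M c = Poly_Mapping.single 0 c"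

definition QM :: "'v rpoly set \<Rightarrow> 'v rpoly set" where
  "QM S = qm_gen UNIV S"

definition mgens :: "'v rpoly set \<Rightarrow> 'v mring set" where
  "mgens S = {mlin (f * f * emb_R s) | f s. f \<in> MXcar \<and> s \<in> insert 1 S}"

definition qm_M :: "'v rpoly set \<Rightarrow> 'v mring set" where
  "qm_M S = qm_gen Mcar (mgens S)"

definition QM_MX :: "'v rpoly set \<Rightarrow> 'v mxpoly set" where
  "QM_MX S = qm_gen MXcar (emb_R ` S \<union> emb_M ` mgens S)"

end

theory Submission
  imports Defs
begin

text \<open>For a quadratic module \<open>M\<close> of a subring \<open>A\<close> containing the reals, the elements \<open>a \<in> A\<close>
  with \<open>N \<plusminus> a \<in> M\<close> for some \<open>N\<close> form a subring: closure under products comes from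
  \<open>(K + a)\<^sup>2(K - a) + (K - a)\<^sup>2(K + a) = 2K(K\<^sup>2 - a\<^sup>2)\<close> and \<open>4ab = (a + b)\<^sup>2 - (a - b)\<^sup>2\<close>.
  So \<open>M\<close> is archimedean in \<open>A\<close> as soon as a set of ring generators is bounded.
  The map \<open>q \<mapsto> m(q)\<close> sends \<open>QM(S)\<close> into \<open>qm(S,\<emptyset>)\<close>, and the inclusions
  \<open>\<real>[x] \<subseteq> M[x]\<close>, \<open>M \<subseteq> M[x]\<close> send \<open>QM(S)\<close> and \<open>qm(S,\<emptyset>)\<close> into \<open>QM(S,\<emptyset>)\<close>; hence the
  generators \<open>m\<^sub>\<alpha> = m(x\<^sup>\<alpha>)\<close> of \<open>M\<close>, and \<open>x\<^sup>\<alpha>\<close> together with the constants \<open>c \<in> M\<close> of \<open>M[x]\<close>,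
  inherit boundedness from the archimedean module \<open>QM(S)\<close>.\<close>

section \<open>Arithmetically bounded elements\<close>

definition arch_bounded :: "'a::comm_ring_1 set \<Rightarrow> 'a \<Rightarrow> bool" where
  "arch_bounded M a \<longleftrightarrow> (\<exists>N::nat. of_nat N + a \<in> M \<and> of_nat N - a \<in> M)"

lemma archimedean_in_iff_arch_bounded: "archimedean_in A M \<longleftrightarrow> (\<forall>a\<in>A. arch_bounded M a)"
  by (simp add: archimedean_in_def arch_bounded_def)

lemma arch_bounded_uminus: "arch_bounded M a \<Longrightarrow> arch_bounded M (- a)"
  unfolding arch_bounded_def by auto

lemma arch_bounded_image:
  assumes "arch_bounded M a" and "additive h" and "\<And>n. h (of_nat n) = of_nat n"
    and "\<And>x. x \<in> M \<Longrightarrow> h x \<in> M'"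
  shows "arch_bounded M' (h a)"
proof -
  obtain N where "of_nat N + a \<in> M" "of_nat N - a \<in> M"
    using assms(1) unfolding arch_bounded_def by blast
  then have "h (of_nat N + a) \<in> M'" "h (of_nat N - a) \<in> M'"
    using assms(4) by blast+
  then show ?thesis
    unfolding arch_bounded_def additive.add[OF assms(2)] additive.diff[OF assms(2)] assms(3)
    by blast
qed

lemma arch_bounded_add:
  assumes "arch_bounded (qm_gen A G) a" and "arch_bounded (qm_gen A G) b"
  shows "arch_bounded (qm_gen A G) (a + b)"
proof -
  obtain N K where
    "of_nat N + a \<in> qm_gen A G" "of_nat N - a \<in> qm_gen A G"
    "of_nat K + b \<in> qm_gen A G" "of_nat K - b \<in> qm_gen A G"
    using assms unfolding arch_bounded_def by blast
  then have "(of_nat N + a) + (of_nat K + b) \<in> qm_gen A G"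
    "(of_nat N - a) + (of_nat K - b) \<in> qm_gen A G"
    by (blast intro: qm_gen.add)+
  then have "of_nat (N + K) + (a + b) \<in> qm_gen A G" "of_nat (N + K) - (a + b) \<in> qm_gen A G"
    by (simp_all add: algebra_simps)
  then show ?thesis
    unfolding arch_bounded_def by blast
qed

lemma qm_gen_hom_image:
  assumes "p \<in> qm_gen A G" and "additive h" and "\<And>x y. h (x * y) = h x * h y" and "h 1 = 1"
    and "h ` A \<subseteq> A'" and "h ` G \<subseteq> qm_gen A' G'"
  shows "h p \<in> qm_gen A' G'"
  using assms(1)
proof (induction p rule: qm_gen.induct)
  case (sq a p)
  then show ?case
    using assms(3,5) by (auto intro: qm_gen.sq)
qed (use assms(2,4,6) in \<open>auto simp: additive.add intro: qm_gen.intros\<close>)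

text \<open>The ambient \<open>poly_mapping\<close> rings are not instances of \<open>real_algebra_1\<close>, so the
  real scalars enter through an explicit ring homomorphism \<open>scalar\<close>.\<close>

locale real_subalgebra = scalar: additive scalar
  for scalar :: "real \<Rightarrow> 'a::comm_ring_1" +
  fixes A :: "'a set"
  assumes scalar_mult: "scalar (x * y) = scalar x * scalar y"
    and scalar_one: "scalar 1 = 1"
    and scalar_in: "scalar c \<in> A"
    and add_closed: "a \<in> A \<Longrightarrow> b \<in> A \<Longrightarrow> a + b \<in> A"
    and uminus_closed: "a \<in> A \<Longrightarrow> - a \<in> A"
    and mult_closed: "a \<in> A \<Longrightarrow> b \<in> A \<Longrightarrow> a * b \<in> A"
begin

lemma scalar_of_nat: "scalar (of_nat n) = of_nat n"
  by (induction n) (simp_all add: scalar.zero scalar.add scalar_one)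

lemma of_nat_in: "of_nat n \<in> A"
  using scalar_in[of "of_nat n"] by (simp only: scalar_of_nat)

lemma diff_closed: "a \<in> A \<Longrightarrow> b \<in> A \<Longrightarrow> a - b \<in> A"
  using add_closed[of a "- b"] uminus_closed[of b] by simp

lemma zero_closed: "0 \<in> A"
  using of_nat_in[of 0] by simp

lemma sum_closed: "(\<And>i. i \<in> I \<Longrightarrow> f i \<in> A) \<Longrightarrow> sum f I \<in> A"
  using zero_closed by (induction I rule: infinite_finite_induct) (auto intro: add_closed)

lemma prod_closed: "(\<And>i. i \<in> I \<Longrightarrow> f i \<in> A) \<Longrightarrow> prod f I \<in> A"
  using of_nat_in[of 1] by (induction I rule: infinite_finite_induct) (auto intro: mult_closed)

lemma power_closed: "a \<in> A \<Longrightarrow> a ^ n \<in> A"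
  using prod_closed[of "{..<n}" "\<lambda>_. a"] by simp

lemma nonneg_scalar_in_qm_gen: "0 \<le> c \<Longrightarrow> scalar c \<in> qm_gen A G"
proof -
  assume "0 \<le> c"
  then have "scalar c = scalar (sqrt c) * scalar (sqrt c) * 1"
    by (simp flip: scalar_mult)
  then show ?thesis
    using qm_gen.sq[OF scalar_in qm_gen.one] by simp
qed

lemma of_nat_in_qm_gen: "of_nat n \<in> qm_gen A G"
  using nonneg_scalar_in_qm_gen[of "of_nat n"] by (simp add: scalar_of_nat)

lemma qm_gen_of_nat_mult_cancel:
  assumes "0 < n" and "of_nat n * x \<in> qm_gen A G"
  shows "x \<in> qm_gen A G"
proof -
  define r where "r = scalar (1 / sqrt (real n))"
  have "r * r * of_nat n = scalar (1 / sqrt (real n) * (1 / sqrt (real n)) * real n)"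
    unfolding r_def by (simp only: scalar_mult scalar_of_nat)
  also have "\<dots> = 1"
    using assms(1) by (simp add: scalar_one)
  finally have "x = r * r * (of_nat n * x)"
    by (simp add: mult.assoc [symmetric])
  also have "\<dots> \<in> qm_gen A G"
    unfolding r_def by (rule qm_gen.sq[OF scalar_in assms(2)])
  finally show ?thesis .
qed

lemma arch_bounded_of_nat_mult_cancel:
  assumes "arch_bounded (qm_gen A G) (of_nat n * a)" and "0 < n"
  shows "arch_bounded (qm_gen A G) a"
proof -
  obtain N where "of_nat N + of_nat n * a \<in> qm_gen A G" "of_nat N - of_nat n * a \<in> qm_gen A G"
    using assms(1) unfolding arch_bounded_def by blast
  then have "(of_nat N + of_nat n * a) + of_nat ((n - 1) * N) \<in> qm_gen A G"
    "(of_nat N - of_nat n * a) + of_nat ((n - 1) * N) \<in> qm_gen A G"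
    using qm_gen.add[OF _ of_nat_in_qm_gen] by blast+
  moreover have "(of_nat N + of_nat n * a) + of_nat ((n - 1) * N) = of_nat n * (of_nat N + a)"
    "(of_nat N - of_nat n * a) + of_nat ((n - 1) * N) = of_nat n * (of_nat N - a)"
    using assms(2) by (simp_all add: algebra_simps of_nat_diff)
  ultimately have "of_nat n * (of_nat N + a) \<in> qm_gen A G" "of_nat n * (of_nat N - a) \<in> qm_gen A G"
    by simp_all
  then show ?thesis
    unfolding arch_bounded_def using qm_gen_of_nat_mult_cancel[OF assms(2)] by blast
qed

lemma arch_bounded_scalar: "arch_bounded (qm_gen A G) (scalar c)"
proof -
  define N where "N = nat \<lceil>\<bar>c\<bar>\<rceil>"
  have "0 \<le> real N + c" "0 \<le> real N - c"
    unfolding N_def by linarith+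
  then have "scalar (real N + c) \<in> qm_gen A G" "scalar (real N - c) \<in> qm_gen A G"
    by (blast intro: nonneg_scalar_in_qm_gen)+
  then show ?thesis
    unfolding arch_bounded_def scalar.add scalar.diff scalar_of_nat by blast
qed

lemma arch_bounded_square:
  assumes "a \<in> A" and "arch_bounded (qm_gen A G) a"
  shows "arch_bounded (qm_gen A G) (a * a)"
proof -
  obtain N where "of_nat N + a \<in> qm_gen A G" "of_nat N - a \<in> qm_gen A G"
    using assms(2) unfolding arch_bounded_def by blast
  define K where "K = Suc N"
  define u v where "u = of_nat K + a" and "v = of_nat K - a"
  have uv: "u \<in> qm_gen A G" "v \<in> qm_gen A G"
    using qm_gen.add[OF qm_gen.one \<open>of_nat N + a \<in> qm_gen A G\<close>]
      qm_gen.add[OF qm_gen.one \<open>of_nat N - a \<in> qm_gen A G\<close>]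
    by (simp_all add: u_def v_def K_def algebra_simps)
  have "u \<in> A" "v \<in> A"
    unfolding u_def v_def using assms(1) of_nat_in add_closed diff_closed by auto
  then have "u * u * v + v * v * u \<in> qm_gen A G"
    using qm_gen.add[OF qm_gen.sq qm_gen.sq] uv by blast
  moreover have "u * u * v + v * v * u = of_nat (2 * K) * (of_nat (K * K) - a * a)"
    unfolding u_def v_def by (simp add: algebra_simps)
  ultimately have "of_nat (K * K) - a * a \<in> qm_gen A G"
    using qm_gen_of_nat_mult_cancel[of "2 * K"] by (simp add: K_def)
  moreover have "of_nat (K * K) + a * a \<in> qm_gen A G"
    using qm_gen.add[OF of_nat_in_qm_gen qm_gen.sq[OF assms(1) qm_gen.one]] by (simp only: mult_1_right)
  ultimately show ?thesis
    unfolding arch_bounded_def by blast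
qed

lemma arch_bounded_mult:
  assumes "a \<in> A" "b \<in> A" and "arch_bounded (qm_gen A G) a" "arch_bounded (qm_gen A G) b"
  shows "arch_bounded (qm_gen A G) (a * b)"
proof -
  have "arch_bounded (qm_gen A G) (a - b)"
    using arch_bounded_add[OF assms(3) arch_bounded_uminus[OF assms(4)]] by simp
  then have "arch_bounded (qm_gen A G) ((a + b) * (a + b) + - ((a - b) * (a - b)))"
    using assms
    by (intro arch_bounded_add arch_bounded_uminus arch_bounded_square add_closed diff_closed)
  moreover have "(a + b) * (a + b) + - ((a - b) * (a - b)) = 4 * (a * b)"
    by (simp add: algebra_simps)
  ultimately have "arch_bounded (qm_gen A G) (of_nat 4 * (a * b))"
    by simp
  then show ?thesis
    by (rule arch_bounded_of_nat_mult_cancel[where n = 4]) simp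
qed

lemma arch_bounded_sum:
  "(\<And>i. i \<in> I \<Longrightarrow> arch_bounded (qm_gen A G) (f i)) \<Longrightarrow> arch_bounded (qm_gen A G) (sum f I)"
proof (induction I rule: infinite_finite_induct)
  case (insert i I)
  then show ?case
    by (simp add: arch_bounded_add)
qed (use arch_bounded_scalar[where c = 0] in \<open>simp_all add: scalar.zero\<close>)

lemma arch_bounded_prod:
  "(\<And>i. i \<in> I \<Longrightarrow> f i \<in> A \<and> arch_bounded (qm_gen A G) (f i)) \<Longrightarrow> arch_bounded (qm_gen A G) (prod f I)"
proof (induction I rule: infinite_finite_induct)
  case (insert i I)
  have "prod f I \<in> A"
    using insert.prems by (intro prod_closed) auto
  then show ?case
    using insert by (simp add: arch_bounded_mult)
qed (use arch_bounded_scalar[where c = 1] in \<open>simp_all add: scalar_one\<close>)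

lemma arch_bounded_power:
  "a \<in> A \<Longrightarrow> arch_bounded (qm_gen A G) a \<Longrightarrow> arch_bounded (qm_gen A G) (a ^ n)"
  using arch_bounded_prod[of "{..<n}" "\<lambda>_. a"] by simp

end

section \<open>Finitely supported functions\<close>

lemma poly_mapping_sum_single: "(\<Sum>k\<in>Poly_Mapping.keys p. Poly_Mapping.single k (Poly_Mapping.lookup p k)) = p"
proof (rule poly_mapping_eqI)
  fix x
  show "Poly_Mapping.lookup (\<Sum>k\<in>Poly_Mapping.keys p. Poly_Mapping.single k (Poly_Mapping.lookup p k)) x
      = Poly_Mapping.lookup p x"
    by (simp add: lookup_sum lookup_single when_def sum.delta in_keys_iff)
qed

lemma times_poly_mapping_eq_sum_single:
  "p * q = (\<Sum>k\<in>Poly_Mapping.keys p. \<Sum>l\<in>Poly_Mapping.keys q.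
      Poly_Mapping.single (k + l) (Poly_Mapping.lookup p k * Poly_Mapping.lookup q l))"
proof -
  have "p * q = (\<Sum>k\<in>Poly_Mapping.keys p. Poly_Mapping.single k (Poly_Mapping.lookup p k))
      * (\<Sum>l\<in>Poly_Mapping.keys q. Poly_Mapping.single l (Poly_Mapping.lookup q l))"
    by (simp only: poly_mapping_sum_single)
  then show ?thesis
    by (simp add: sum_product mult_single)
qed

lemma lookup_map: "f 0 = 0 \<Longrightarrow> Poly_Mapping.lookup (Poly_Mapping.map f p) k = f (Poly_Mapping.lookup p k)"
  by (simp add: Poly_Mapping.map.rep_eq when_def)

lemma additive_map: "additive f \<Longrightarrow> additive (Poly_Mapping.map f)"
  by (intro additive.intro poly_mapping_eqI) (simp add: lookup_map additive.zero additive.add lookup_add)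

lemma map_mult:
  assumes "additive f" and "\<And>x y. f (x * y) = f x * f y"
  shows "Poly_Mapping.map f (p * q) = Poly_Mapping.map f p * Poly_Mapping.map f q"
proof -
  have map_eq: "Poly_Mapping.map f r = (\<Sum>k\<in>Poly_Mapping.keys r. Poly_Mapping.single k (f (Poly_Mapping.lookup r k)))" for r
  proof -
    have "Poly_Mapping.map f r
        = Poly_Mapping.map f (\<Sum>k\<in>Poly_Mapping.keys r. Poly_Mapping.single k (Poly_Mapping.lookup r k))"
      by (simp only: poly_mapping_sum_single)
    then show ?thesis
      by (simp add: additive.sum[OF additive_map[OF assms(1)]] additive.zero[OF assms(1)])
  qed
  have "Poly_Mapping.map f (p * q) = (\<Sum>k\<in>Poly_Mapping.keys p. \<Sum>l\<in>Poly_Mapping.keys q.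
      Poly_Mapping.single (k + l) (f (Poly_Mapping.lookup p k) * f (Poly_Mapping.lookup q l)))"
    by (subst times_poly_mapping_eq_sum_single)
      (simp add: additive.sum[OF additive_map[OF assms(1)]] additive.zero[OF assms(1)] assms(2))
  also have "\<dots> = Poly_Mapping.map f p * Poly_Mapping.map f q"
    by (simp add: map_eq sum_product mult_single)
  finally show ?thesis .
qed

lemma single_sum_one: "Poly_Mapping.single (sum f K) 1 = (\<Prod>a\<in>K. Poly_Mapping.single (f a) 1)"
proof (induction K rule: infinite_finite_induct)
  case (insert a K)
  then show ?case
    by (simp add: mult_single flip: insert.IH)
qed simp_all

lemma single_single_one_power:
  "Poly_Mapping.single (Poly_Mapping.single a n) 1
    = Poly_Mapping.single (Poly_Mapping.single a 1) (1::'b::comm_semiring_1) ^ n"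
proof (induction n)
  case (Suc n)
  have "Poly_Mapping.single (Poly_Mapping.single a (Suc n)) 1
      = Poly_Mapping.single (Poly_Mapping.single a 1) 1 * Poly_Mapping.single (Poly_Mapping.single a n) (1::'b)"
    by (simp add: mult_single flip: single_add)
  then show ?case
    by (simp only: Suc.IH power_Suc)
qed simp

lemma additive_single_zero: "additive (Poly_Mapping.single 0)"
  by (rule additive.intro) (simp add: single_add)

section \<open>The rings \<open>M\<close> and \<open>M[x]\<close>\<close>

lemma single_in_Mcar: "Poly_Mapping.lookup \<mu> 0 = 0 \<Longrightarrow> Poly_Mapping.single \<mu> c \<in> Mcar"
  by (simp add: Mcar_def)

lemma mvar_in_Mcar: "mvar \<alpha> \<in> Mcar"
  by (simp add: mvar_def Mcar_def lookup_single)

interpretation Mcar: real_subalgebra "Poly_Mapping.single 0" Mcar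
proof
  fix a b :: "'v mring"
  assume a: "a \<in> Mcar" and b: "b \<in> Mcar"
  show "a + b \<in> Mcar"
    using a b keys_add[of a b] unfolding Mcar_def by blast
  show "a * b \<in> Mcar"
    using a b keys_mult[of a b] unfolding Mcar_def by (fastforce simp: lookup_add)
qed (auto simp: single_add mult_single single_in_Mcar Mcar_def)

lemma single_eq_prod_mvar:
  assumes "Poly_Mapping.lookup \<mu> 0 = 0"
  shows "Poly_Mapping.single \<mu> 1 = (\<Prod>\<alpha>\<in>Poly_Mapping.keys \<mu>. mvar \<alpha> ^ Poly_Mapping.lookup \<mu> \<alpha>)"
proof -
  have "Poly_Mapping.single \<mu> (1::real)
      = Poly_Mapping.single (\<Sum>\<alpha>\<in>Poly_Mapping.keys \<mu>. Poly_Mapping.single \<alpha> (Poly_Mapping.lookup \<mu> \<alpha>)) 1"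
    by (simp only: poly_mapping_sum_single)
  also have "\<dots> = (\<Prod>\<alpha>\<in>Poly_Mapping.keys \<mu>. Poly_Mapping.single (Poly_Mapping.single \<alpha> 1) 1 ^ Poly_Mapping.lookup \<mu> \<alpha>)"
    by (simp only: single_sum_one) (rule prod.cong[OF refl single_single_one_power])
  also have "\<dots> = (\<Prod>\<alpha>\<in>Poly_Mapping.keys \<mu>. mvar \<alpha> ^ Poly_Mapping.lookup \<mu> \<alpha>)"
    using assms by (intro prod.cong) (auto simp: mvar_def in_keys_iff)
  finally show ?thesis .
qed

lemma MXcar_mult_closed:
  assumes "p \<in> MXcar" and "q \<in> MXcar"
  shows "p * q \<in> MXcar"
proof -
  have "Poly_Mapping.lookup (p * q) \<alpha> = (\<Sum>k\<in>Poly_Mapping.keys p. \<Sum>l\<in>Poly_Mapping.keys q.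
      (Poly_Mapping.lookup p k * Poly_Mapping.lookup q l when k + l = \<alpha>))" for \<alpha>
    by (subst times_poly_mapping_eq_sum_single) (simp add: lookup_sum lookup_single)
  moreover have "(\<Sum>k\<in>Poly_Mapping.keys p. \<Sum>l\<in>Poly_Mapping.keys q.
      (Poly_Mapping.lookup p k * Poly_Mapping.lookup q l when k + l = \<alpha>)) \<in> Mcar" for \<alpha>
    using assms unfolding MXcar_def
    by (intro Mcar.sum_closed) (simp add: when_def Mcar.mult_closed Mcar.zero_closed)
  ultimately show ?thesis
    unfolding MXcar_def by simp
qed

interpretation MXcar: real_subalgebra "\<lambda>c. Poly_Mapping.single 0 (Poly_Mapping.single 0 c)" MXcar
proof
  fix a b :: "'v mxpoly"
  assume "a \<in> MXcar" and "b \<in> MXcar"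
  then show "a * b \<in> MXcar"
    by (rule MXcar_mult_closed)
qed (auto simp: single_add MXcar_def lookup_add lookup_single when_def mult_single
    intro: Mcar.add_closed Mcar.uminus_closed Mcar.scalar_in Mcar.zero_closed)

lemma additive_emb_R: "additive emb_R"
  unfolding emb_R_def[abs_def] by (intro additive_map additive_single_zero)

lemma emb_R_mult: "emb_R (p * q) = emb_R p * emb_R q"
  unfolding emb_R_def by (intro map_mult additive_single_zero) (simp add: mult_single)

lemma emb_R_single: "emb_R (Poly_Mapping.single \<alpha> c) = Poly_Mapping.single \<alpha> (Poly_Mapping.single 0 c)"
  by (simp add: emb_R_def)

lemma emb_R_of_nat: "emb_R (of_nat n) = of_nat n"
  using emb_R_single[of 0 "of_nat n"] by simp

lemma emb_R_one: "emb_R 1 = 1"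
  using emb_R_of_nat[of 1] by simp

lemma emb_R_in_MXcar: "emb_R p \<in> MXcar"
  by (simp add: MXcar_def emb_R_def lookup_map Mcar.scalar_in)

lemma additive_emb_M: "additive emb_M"
  unfolding emb_M_def[abs_def] by (rule additive_single_zero)

lemma emb_M_mult: "emb_M (a * b) = emb_M a * emb_M b"
  by (simp add: emb_M_def mult_single)

lemma emb_M_of_nat: "emb_M (of_nat n) = of_nat n"
  by (simp add: emb_M_def)

lemma emb_M_one: "emb_M 1 = 1"
  using emb_M_of_nat[of 1] by simp

lemma emb_M_in_MXcar: "c \<in> Mcar \<Longrightarrow> emb_M c \<in> MXcar"
  by (simp add: MXcar_def emb_M_def lookup_single when_def Mcar.zero_closed)

lemma mlin_eq_sum_superset:
  "finite K \<Longrightarrow> Poly_Mapping.keys p \<subseteq> K \<Longrightarrow> mlin p = (\<Sum>\<alpha>\<in>K. Poly_Mapping.lookup p \<alpha> * mvar \<alpha>)"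
  unfolding mlin_def by (rule sum.mono_neutral_left) (auto simp: in_keys_iff)

lemma additive_mlin: "additive mlin"
proof
  fix p q :: "'v mxpoly"
  let ?K = "Poly_Mapping.keys p \<union> Poly_Mapping.keys q"
  have "mlin (p + q) = (\<Sum>\<alpha>\<in>?K. Poly_Mapping.lookup (p + q) \<alpha> * mvar \<alpha>)"
    using keys_add[of p q] by (intro mlin_eq_sum_superset) auto
  also have "\<dots> = (\<Sum>\<alpha>\<in>?K. Poly_Mapping.lookup p \<alpha> * mvar \<alpha>) + (\<Sum>\<alpha>\<in>?K. Poly_Mapping.lookup q \<alpha> * mvar \<alpha>)"
    by (simp add: lookup_add distrib_right sum.distrib)
  also have "\<dots> = mlin p + mlin q"
    using mlin_eq_sum_superset[of ?K p] mlin_eq_sum_superset[of ?K q] by simp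
  finally show "mlin (p + q) = mlin p + mlin q" .
qed

lemma mlin_single: "mlin (Poly_Mapping.single \<alpha> c) = c * mvar \<alpha>"
  by (simp add: mlin_def)

lemma mlin_of_nat: "mlin (of_nat n) = of_nat n"
  using mlin_single[of 0 "of_nat n"] by (simp add: mvar_def)

section \<open>Transfer of the archimedean property\<close>

text \<open>The factor \<open>g * g\<close> makes the induction go through the case of a square multiple;
  only \<open>g = 1\<close> is used afterwards.\<close>

lemma mlin_emb_R_square_mult_in_qm_M:
  "q \<in> QM S \<Longrightarrow> mlin (emb_R (g * g * q)) \<in> qm_M S"
  unfolding QM_def
proof (induction q arbitrary: g rule: qm_gen.induct)
  case one
  have "mlin (emb_R g * emb_R g * emb_R 1) \<in> mgens S"
    unfolding mgens_def using emb_R_in_MXcar by blast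
  then show ?case
    unfolding qm_M_def by (simp only: emb_R_mult qm_gen.gen)
next
  case (gen s)
  then have "mlin (emb_R g * emb_R g * emb_R s) \<in> mgens S"
    unfolding mgens_def using emb_R_in_MXcar by blast
  then show ?case
    unfolding qm_M_def by (simp only: emb_R_mult qm_gen.gen)
next
  case (add p q)
  then show ?case
    unfolding qm_M_def
    by (simp add: distrib_left additive.add[OF additive_emb_R] additive.add[OF additive_mlin] qm_gen.add)
next
  case (sq a p)
  have "g * g * (a * a * p) = (g * a) * (g * a) * p"
    by (simp add: ac_simps)
  then show ?case
    using sq.IH[of "g * a"] by (simp only:)
qed

lemma emb_R_in_QM_MX: "q \<in> QM S \<Longrightarrow> emb_R q \<in> QM_MX S"
  unfolding QM_def QM_MX_def
  by (erule qm_gen_hom_image)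
    (auto simp: additive_emb_R emb_R_mult emb_R_one emb_R_in_MXcar intro: qm_gen.gen)

lemma emb_M_in_QM_MX: "c \<in> qm_M S \<Longrightarrow> emb_M c \<in> QM_MX S"
  unfolding qm_M_def QM_MX_def
  by (erule qm_gen_hom_image)
    (auto simp: additive_emb_M emb_M_mult emb_M_one emb_M_in_MXcar intro: qm_gen.gen)

lemma arch_bounded_mvar:
  fixes S :: "'v rpoly set"
  assumes "archimedean_in UNIV (QM S)"
  shows "arch_bounded (qm_M S) (mvar \<alpha>)"
proof -
  have "arch_bounded (QM S) (Poly_Mapping.single \<alpha> 1)"
    using assms by (simp add: archimedean_in_iff_arch_bounded)
  then have "arch_bounded (qm_M S) (mlin (emb_R (Poly_Mapping.single \<alpha> 1)))"
  proof (rule arch_bounded_image[where h = "\<lambda>q. mlin (emb_R q)"])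
    show "additive (\<lambda>q. mlin (emb_R q))"
      by (simp add: additive_def additive.add[OF additive_emb_R] additive.add[OF additive_mlin])
    show "mlin (emb_R q) \<in> qm_M S" if "q \<in> QM S" for q
      using mlin_emb_R_square_mult_in_qm_M[OF that, of 1] by simp
  qed (simp add: emb_R_of_nat mlin_of_nat)
  then show ?thesis
    by (simp add: emb_R_single mlin_single)
qed

lemma arch_bounded_monomial:
  fixes S :: "'v rpoly set"
  assumes "archimedean_in UNIV (QM S)" and "Poly_Mapping.lookup \<mu> 0 = 0"
  shows "arch_bounded (qm_M S) (Poly_Mapping.single \<mu> 1)"
  unfolding single_eq_prod_mvar[OF assms(2)] qm_M_def
  using arch_bounded_mvar[OF assms(1)] mvar_in_Mcar
  by (intro Mcar.arch_bounded_prod conjI Mcar.power_closed Mcar.arch_bounded_power) (simp_all add: qm_M_def)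

lemma archimedean_qm_M:
  fixes S :: "'v rpoly set"
  assumes "archimedean_in UNIV (QM S)"
  shows "archimedean_in Mcar (qm_M S)"
  unfolding archimedean_in_iff_arch_bounded
proof
  fix p :: "'v mring"
  assume p: "p \<in> Mcar"
  have "arch_bounded (qm_M S) (Poly_Mapping.single \<mu> (Poly_Mapping.lookup p \<mu>))"
    if "\<mu> \<in> Poly_Mapping.keys p" for \<mu>
  proof -
    have "Poly_Mapping.lookup \<mu> 0 = 0"
      using p that by (simp add: Mcar_def)
    then have "arch_bounded (qm_gen Mcar (mgens S))
        (Poly_Mapping.single 0 (Poly_Mapping.lookup p \<mu>) * Poly_Mapping.single \<mu> 1)"
      using arch_bounded_monomial[OF assms] unfolding qm_M_def
      by (intro Mcar.arch_bounded_mult Mcar.scalar_in Mcar.arch_bounded_scalar single_in_Mcar)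
    then show ?thesis
      by (simp add: qm_M_def mult_single)
  qed
  then have "arch_bounded (qm_M S) (\<Sum>\<mu>\<in>Poly_Mapping.keys p. Poly_Mapping.single \<mu> (Poly_Mapping.lookup p \<mu>))"
    unfolding qm_M_def by (intro Mcar.arch_bounded_sum)
  then show "arch_bounded (qm_M S) p"
    by (simp only: poly_mapping_sum_single)
qed

lemma archimedean_QM_MX:
  fixes S :: "'v rpoly set"
  assumes "archimedean_in UNIV (QM S)"
  shows "archimedean_in MXcar (QM_MX S)"
  unfolding archimedean_in_iff_arch_bounded
proof
  fix p :: "'v mxpoly"
  assume p: "p \<in> MXcar"
  have coeff: "arch_bounded (QM_MX S) (emb_M c)" if "c \<in> Mcar" for c
    using archimedean_qm_M[OF assms] that unfolding archimedean_in_iff_arch_bounded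
    by (intro arch_bounded_image[OF _ additive_emb_M] emb_M_in_QM_MX) (auto simp: emb_M_of_nat)
  have monomial: "arch_bounded (QM_MX S) (emb_R q)" for q
    using assms unfolding archimedean_in_iff_arch_bounded
    by (intro arch_bounded_image[OF _ additive_emb_R] emb_R_in_QM_MX) (auto simp: emb_R_of_nat)
  have "arch_bounded (QM_MX S) (Poly_Mapping.single \<alpha> (Poly_Mapping.lookup p \<alpha>))" for \<alpha>
  proof -
    have "Poly_Mapping.lookup p \<alpha> \<in> Mcar"
      using p by (simp add: MXcar_def)
    then have "arch_bounded (qm_gen MXcar (emb_R ` S \<union> emb_M ` mgens S))
        (emb_M (Poly_Mapping.lookup p \<alpha>) * emb_R (Poly_Mapping.single \<alpha> 1))"
      using coeff monomial unfolding QM_MX_def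
      by (intro MXcar.arch_bounded_mult emb_M_in_MXcar emb_R_in_MXcar)
    then show ?thesis
      by (simp add: QM_MX_def emb_M_def emb_R_single mult_single)
  qed
  then have "arch_bounded (QM_MX S) (\<Sum>\<alpha>\<in>Poly_Mapping.keys p. Poly_Mapping.single \<alpha> (Poly_Mapping.lookup p \<alpha>))"
    unfolding QM_MX_def by (intro MXcar.arch_bounded_sum)
  then show "arch_bounded (QM_MX S) p"
    by (simp only: poly_mapping_sum_single)
qed

theorem lemma4p1:
  fixes S :: "('v::finite) rpoly set"
  assumes "archimedean_in UNIV (QM S)"
  shows "archimedean_in Mcar (qm_M S) \<and> archimedean_in MXcar (QM_MX S)"
  using archimedean_qm_M[OF assms] archimedean_QM_MX[OF assms] by blast

end
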